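(* Let $N\ge3$, $z=\lfloor N/2\rfloor$, $n=\lfloor(N+1)/2\rfloor$ and let $\nu_1,\dots,\nu_z,\rho_1,\dots,\rho_{n-1}$ be nonzero complex numbers. Consider $$r=\sum_{k=0}^{z-1}\nu_{k+1}\Big(H^{\mathcal P}_{k+1}\wedge E_{k+1,N-k}+\sum_{s=k+2}^{N-k-1}E_{k+1,s}\wedge E_{s,N-k}\Big)+\sum_{i=1}^{n-1}\rho_iH^\perp_i\wedge E_{i,N-i}\ \in\Lambda^2 sl(N).$$ Then there is an injective Lie algebra homomorphism $\varphi:\mathfrak g\to sl(N)$ with image contained in the Borel subalgebra $\mathfrak b^+$ of upper triangular traceless matrices such that $r\in\Lambda^2\varphi(\mathfrak g)$ and $r$ is nondegenerate as an element of $\Lambda^2\varphi(\mathfrak g)$. Consequently the carrier of $r$ is $\varphi(\mathfrak g)$, a Lie algebra isomorphic to $\mathfrak g$ of dimension $(N^2+N-2n)/2$.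
   Context: $E_{ij}$ are the matrix units of $gl(N)$ over $\mathbb C$, $I=\sum_sE_{ss}$, $a\wedge b:=a\otimes b-b\otimes a$. $H^{\mathcal P}_k:=E_{kk}-\frac1NI$; $H^\perp_i:=\frac{N-2i}{N}I-\sum_{m=i+1}^{N-i}E_{mm}$. Let $\mathfrak g\subset sl(N)$ be the subalgebra spanned by the Cartan subalgebra of diagonal traceless matrices (equivalently by $H^{\mathcal P}_1,\dots,H^{\mathcal P}_z,H^\perp_1,\dots,H^\perp_{n-1}$) together with all $E_{lm}$, $l<m$, except $E_{j,j+1}$ for $z+1\le j\le N-1$; explicitly the root vectors are $E_{lm}$ with ($1\le l<m\le z$), or ($1\le l\le z<m\le N$), or ($z+1\le l$, $l+2\le m\le N$). The carrier of $r\in\Lambda^2 sl(N)$ is the smallest Lie subalgebra $\mathfrak c\subset sl(N)$ with $r\in\Lambda^2\mathfrak c$; $r\in\Lambda^2\mathfrak c$ is nondegenerate if the induced map $\mathfrak c^*\to\mathfrak c$ is bijective. *)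

theory Defs
  imports Complex_Main "HOL-Library.Function_Algebras"
begin

text \<open>N x N complex matrices are represented as functions nat => nat => complex with
 indices in {1..N} (entries outside are 0).  Elements of gl(N) (x) gl(N) are represented by
 their coefficient functions: T i j k l is the coefficient of E_ij (x) E_kl.\<close>

type_synonym cmat = "nat \<Rightarrow> nat \<Rightarrow> complex"
type_synonym ctens = "nat \<Rightarrow> nat \<Rightarrow> nat \<Rightarrow> nat \<Rightarrow> complex"

definition gl :: "nat \<Rightarrow> cmat set" where
  "gl N = {A. \<forall>i j. (i \<notin> {1..N} \<or> j \<notin> {1..N}) \<longrightarrow> A i j = 0}"

definition mtrace :: "nat \<Rightarrow> cmat \<Rightarrow> complex" where
  "mtrace N A = (\<Sum>i\<in>{1..N}. A i i)"

definition sl :: "nat \<Rightarrow> cmat set" where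
  "sl N = {A \<in> gl N. mtrace N A = 0}"

definition msmult :: "complex \<Rightarrow> cmat \<Rightarrow> cmat" where
  "msmult c A = (\<lambda>i j. c * A i j)"

definition mmult :: "nat \<Rightarrow> cmat \<Rightarrow> cmat \<Rightarrow> cmat" where
  "mmult N A B = (\<lambda>i k. \<Sum>j\<in>{1..N}. A i j * B j k)"

definition bracket :: "nat \<Rightarrow> cmat \<Rightarrow> cmat \<Rightarrow> cmat" where
  "bracket N A B = mmult N A B - mmult N B A"

definition E :: "nat \<Rightarrow> nat \<Rightarrow> cmat" where
  "E i j = (\<lambda>a b. if a = i \<and> b = j then 1 else 0)"

definition Id :: "nat \<Rightarrow> cmat" where
  "Id N = (\<Sum>s\<in>{1..N}. E s s)"

definition HP :: "nat \<Rightarrow> nat \<Rightarrow> cmat" where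
  "HP N k = E k k - msmult (1 / of_nat N) (Id N)"

definition Hperp :: "nat \<Rightarrow> nat \<Rightarrow> cmat" where
  "Hperp N i = msmult ((of_nat N - 2 * of_nat i) / of_nat N) (Id N)
               - (\<Sum>m\<in>{i+1..N-i}. E m m)"

definition tens :: "cmat \<Rightarrow> cmat \<Rightarrow> ctens" where
  "tens a b = (\<lambda>i j k l. a i j * b k l)"

definition wedge :: "cmat \<Rightarrow> cmat \<Rightarrow> ctens" where
  "wedge a b = tens a b - tens b a"

definition tsmult :: "complex \<Rightarrow> ctens \<Rightarrow> ctens" where
  "tsmult c T = (\<lambda>i j k l. c * T i j k l)"

definition lie_subalgebra :: "nat \<Rightarrow> cmat set \<Rightarrow> bool" where
  "lie_subalgebra N c \<longleftrightarrow> c \<subseteq> sl N \<and> 0 \<in> c \<and>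
     (\<forall>a\<in>c. \<forall>b\<in>c. a + b \<in> c) \<and> (\<forall>x. \<forall>a\<in>c. msmult x a \<in> c) \<and>
     (\<forall>a\<in>c. \<forall>b\<in>c. bracket N a b \<in> c)"

definition in_tensor2 :: "cmat set \<Rightarrow> ctens \<Rightarrow> bool" where
  "in_tensor2 c r \<longleftrightarrow> (\<exists>ps. set ps \<subseteq> c \<times> c \<and> r = (\<Sum>(a,b)\<leftarrow>ps. tens a b))"

definition in_wedge2 :: "cmat set \<Rightarrow> ctens \<Rightarrow> bool" where
  "in_wedge2 c r \<longleftrightarrow> in_tensor2 c r \<and> (\<forall>i j k l. r k l i j = - r i j k l)"

text \<open>Linear functionals on c are represented by matrices F via the trace pairing
  <F,a> = sum F_ij a_ij (every functional on c extends to gl(N), two represent the same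
  functional iff they agree on c).  The induced map c^* -> c is F |-> (F (x) id)(r).\<close>
definition pairing :: "nat \<Rightarrow> cmat \<Rightarrow> cmat \<Rightarrow> complex" where
  "pairing N F a = (\<Sum>i\<in>{1..N}. \<Sum>j\<in>{1..N}. F i j * a i j)"

definition induced_map :: "nat \<Rightarrow> ctens \<Rightarrow> cmat \<Rightarrow> cmat" where
  "induced_map N r F = (\<lambda>k l. \<Sum>i\<in>{1..N}. \<Sum>j\<in>{1..N}. F i j * r i j k l)"

definition nondegenerate :: "nat \<Rightarrow> cmat set \<Rightarrow> ctens \<Rightarrow> bool" where
  "nondegenerate N c r \<longleftrightarrow> in_wedge2 c r \<and>
     (\<forall>F. induced_map N r F \<in> c) \<and>
     (\<forall>y\<in>c. \<exists>F. induced_map N r F = y) \<and>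
     (\<forall>F. induced_map N r F = 0 \<longrightarrow> (\<forall>a\<in>c. pairing N F a = 0))"

definition is_carrier :: "nat \<Rightarrow> ctens \<Rightarrow> cmat set \<Rightarrow> bool" where
  "is_carrier N r c \<longleftrightarrow> lie_subalgebra N c \<and> in_wedge2 c r \<and>
     (\<forall>d. lie_subalgebra N d \<and> in_wedge2 d r \<longrightarrow> c \<subseteq> d)"

definition mdim :: "cmat set \<Rightarrow> nat" where
  "mdim S = vector_space.dim msmult S"

definition borel :: "nat \<Rightarrow> cmat set" where
  "borel N = {A \<in> sl N. \<forall>i j. j < i \<longrightarrow> A i j = 0}"

definition galg :: "nat \<Rightarrow> cmat set" where
  "galg N = {A \<in> borel N. \<forall>j. N div 2 + 1 \<le> j \<and> j \<le> N - 1 \<longrightarrow> A j (j+1) = 0}"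

definition lie_hom_on :: "nat \<Rightarrow> cmat set \<Rightarrow> (cmat \<Rightarrow> cmat) \<Rightarrow> bool" where
  "lie_hom_on N g \<phi> \<longleftrightarrow>
     (\<forall>a\<in>g. \<forall>b\<in>g. \<phi> (a + b) = \<phi> a + \<phi> b) \<and>
     (\<forall>x. \<forall>a\<in>g. \<phi> (msmult x a) = msmult x (\<phi> a)) \<and>
     (\<forall>a\<in>g. \<forall>b\<in>g. \<phi> (bracket N a b) = bracket N (\<phi> a) (\<phi> b))"

definition r_tensor :: "nat \<Rightarrow> (nat \<Rightarrow> complex) \<Rightarrow> (nat \<Rightarrow> complex) \<Rightarrow> ctens" where
  "r_tensor N \<nu> \<rho> =
     (\<Sum>k\<in>{0..<N div 2}. tsmult (\<nu> (k+1))
         (wedge (HP N (k+1)) (E (k+1) (N-k)) +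
          (\<Sum>s\<in>{k+2..N-k-1}. wedge (E (k+1) s) (E s (N-k)))))
   + (\<Sum>i\<in>{1..(N+1) div 2 - 1}. tsmult (\<rho> i) (wedge (Hperp N i) (E i (N-i))))"

end

theory Submission
  imports Defs
begin

(* The algebra g is the traceless Borel subalgebra with the superdiagonal entries in rows
   z+1, ..., N-1 set to zero.  Conjugating by the unipotent bidiagonal matrix
   P = I + sum_j t_j E_{j,j+1} with t_j = -nu_{N-j} / rho_{N-j} replaces that condition by
   A_{j,j+1} = t_j (A_{j+1,j+1} - A_{j,j}); the image c = phi(g) is again a Lie subalgebra of b+,
   isomorphic to g.  Regrouping the terms of r exhibits r as an element of c /\ c.

   Conversely, the slice r(E_ab, -) of r is computed for enough pairs (a,b): suitable linear
   combinations of slices give every root vector E_ab of c, the H^P_p with p <= z and the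
   elements of c with diagonal H^P_p or Hperp_i, and these span c.  So the induced map c^* -> c
   is onto; skew-symmetry of r then makes it injective, and any subalgebra d with r in d /\ d
   contains its image, so c is the carrier.  The dimension is that of g, read off from the
   basis {E_ab} u {E_aa - E_NN}. *)

section \<open>Matrices as functions\<close>

lemma sum_fun_apply: "(\<Sum>s\<in>S. f s) x = (\<Sum>s\<in>S. f s x)"
  by (induct S rule: infinite_finite_induct) auto

lemma msmult_apply [simp]: "msmult c A a b = c * A a b"
  by (simp add: msmult_def)

lemma E_apply: "E i j a b = (if a = i \<and> b = j then 1 else 0)"
  by (simp add: E_def)

lemma sum_diag_E_apply:
  assumes "finite S"
  shows "(\<Sum>m\<in>S. E m m) a b = (if a = b \<and> a \<in> S then 1 else 0)"
proof -
  have "(\<Sum>m\<in>S. E m m) a b = (\<Sum>m\<in>S. if m = a then (if a = b then 1 else 0) else 0)"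
    unfolding sum_fun_apply E_apply by (rule sum.cong) auto
  then show ?thesis
    using assms by (simp add: sum.delta)
qed

lemma Id_apply: "Id N a b = (if a = b \<and> a \<in> {1..N} then 1 else 0)"
  by (simp add: Id_def sum_diag_E_apply)

lemma HP_apply:
  "HP N k a b = (if a = k \<and> b = k then 1 else 0) - (if a = b \<and> a \<in> {1..N} then 1 / of_nat N else 0)"
  by (simp add: HP_def E_apply Id_apply)

lemma Hperp_apply:
  "Hperp N i a b = (if a = b \<and> a \<in> {1..N} then (of_nat N - 2 * of_nat i) / of_nat N else 0)
     - (if a = b \<and> i + 1 \<le> a \<and> a \<le> N - i then 1 else 0)"
  by (simp add: Hperp_def Id_apply sum_diag_E_apply)

lemma mtrace_HP: "p \<in> {1..N} \<Longrightarrow> mtrace N (HP N p) = 0"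
  unfolding mtrace_def HP_apply by (simp add: sum_subtractf sum.delta)

lemma mtrace_Hperp:
  assumes "2 * i \<le> N"
  shows "mtrace N (Hperp N i) = 0"
proof (cases "N = 0")
  case False
  have "{a \<in> {1..N}. i + 1 \<le> a \<and> a \<le> N - i} = {i + 1..N - i}"
    by auto
  then have "(\<Sum>a\<in>{1..N}. if i + 1 \<le> a \<and> a \<le> N - i then 1 else 0 :: complex) = of_nat (N - 2 * i)"
    by (simp flip: sum.inter_filter)
  also have "\<dots> = of_nat N - 2 * of_nat i"
    using assms by (simp add: of_nat_diff)
  finally show ?thesis
    using False unfolding mtrace_def Hperp_apply by (simp add: sum_subtractf)
qed (simp add: mtrace_def)

lemma HP_last_eq:
  assumes "2 \<le> N"
  shows "HP N N = Hperp N 1 - HP N 1"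
  using assms by (auto simp: fun_eq_iff HP_apply Hperp_apply field_simps)

lemma HP_mirror_eq:
  assumes "1 \<le> i" "2 * i + 3 \<le> N"
  shows "HP N (N - i) = - (Hperp N i - Hperp N (i + 1)) - HP N (i + 1)"
  using assms by (auto simp: fun_eq_iff HP_apply Hperp_apply field_simps)

lemma HP_middle_odd:
  assumes "N = 2 * k + 1"
  shows "HP N (k + 1) = - Hperp N k"
proof -
  have "(of_nat N :: complex) = 2 * of_nat k + 1"
    using assms by simp
  then show ?thesis
    using assms by (auto simp: fun_eq_iff HP_apply Hperp_apply field_simps)
qed

lemma HP_middle_even:
  assumes "N = 2 * k" "1 \<le> k"
  shows "HP N (k + 1) = - Hperp N (k - 1) - HP N k"
proof -
  have "(of_nat N :: complex) = 2 * of_nat k" "(of_nat (k - 1) :: complex) = of_nat k - 1"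
    using assms by (simp_all add: of_nat_diff)
  then show ?thesis
    using assms by (auto simp: fun_eq_iff HP_apply Hperp_apply field_simps)
qed

interpretation mat: vector_space msmult
  by unfold_locales (auto simp: msmult_def fun_eq_iff algebra_simps)

lemma mmult_assoc: "mmult N (mmult N A B) C = mmult N A (mmult N B C)"
  unfolding mmult_def
  by (auto simp: fun_eq_iff sum_distrib_left sum_distrib_right mult.assoc intro: sum.swap)

lemma mmult_add_left: "mmult N (A + B) C = mmult N A C + mmult N B C"
  by (simp add: mmult_def fun_eq_iff distrib_right sum.distrib)

lemma mmult_add_right: "mmult N C (A + B) = mmult N C A + mmult N C B"
  by (simp add: mmult_def fun_eq_iff distrib_left sum.distrib)

lemma mmult_diff_left: "mmult N (A - B) C = mmult N A C - mmult N B C"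
  by (simp add: mmult_def fun_eq_iff left_diff_distrib sum_subtractf)

lemma mmult_diff_right: "mmult N C (A - B) = mmult N C A - mmult N C B"
  by (simp add: mmult_def fun_eq_iff right_diff_distrib sum_subtractf)

lemma mmult_smult_left: "mmult N (msmult c A) B = msmult c (mmult N A B)"
  by (simp add: mmult_def fun_eq_iff sum_distrib_left mult.assoc)

lemma mmult_smult_right: "mmult N A (msmult c B) = msmult c (mmult N A B)"
  by (simp add: mmult_def fun_eq_iff sum_distrib_left mult.left_commute)

lemma gl_iff: "A \<in> gl N \<longleftrightarrow> (\<forall>i j. i \<notin> {1..N} \<or> j \<notin> {1..N} \<longrightarrow> A i j = 0)"
  by (simp add: gl_def)

lemma mmult_gl: "mmult N A B \<in> gl N" if "A \<in> gl N" "B \<in> gl N"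
  using that by (auto simp: gl_iff mmult_def)

lemma mmult_Id_left: "mmult N (Id N) A = A" if "A \<in> gl N"
proof (rule ext, rule ext)
  fix i k
  have "mmult N (Id N) A i k = (\<Sum>j\<in>{1..N}. if j = i then A i k else 0)"
    unfolding mmult_def Id_apply by (rule sum.cong) auto
  then show "mmult N (Id N) A i k = A i k"
    using that by (auto simp: sum.delta' gl_iff)
qed

lemma mmult_Id_right: "mmult N A (Id N) = A" if "A \<in> gl N"
proof (rule ext, rule ext)
  fix i k
  have "mmult N A (Id N) i k = (\<Sum>j\<in>{1..N}. if j = k then A i k else 0)"
    unfolding mmult_def Id_apply by (rule sum.cong) auto
  then show "mmult N A (Id N) i k = A i k"
    using that by (auto simp: sum.delta' gl_iff)
qed

lemma mtrace_add: "mtrace N (A + B) = mtrace N A + mtrace N B"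
  by (simp add: mtrace_def sum.distrib)

lemma mtrace_smult: "mtrace N (msmult c A) = c * mtrace N A"
  by (simp add: mtrace_def sum_distrib_left)

lemma mtrace_mmult_commute: "mtrace N (mmult N A B) = mtrace N (mmult N B A)"
  unfolding mtrace_def mmult_def by (subst sum.swap) (simp add: mult.commute)

definition mdiag :: "cmat \<Rightarrow> cmat" where
  "mdiag y = (\<lambda>i j. if i = j then y i i else 0)"

lemma mdiag_traceless_decomp:
  assumes "y \<in> gl N" "mtrace N y = 0" "1 \<le> N"
  shows "mdiag y = (\<Sum>a\<in>{1..<N}. msmult (y a a) (E a a - E N N))"
proof (intro ext)
  fix i j
  have "y N N = - (\<Sum>a\<in>{1..<N}. y a a)"
  proof -
    have "{1..N} = insert N {1..<N}"
      using assms(3) by auto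
    then show ?thesis
      using assms(2) unfolding mtrace_def by (simp add: eq_neg_iff_add_eq_0 add.commute)
  qed
  moreover have "(\<Sum>a\<in>{1..<N}. y a a * E a a i j) = (if i = j \<and> i \<in> {1..<N} then y i i else 0)"
  proof -
    have "(\<Sum>a\<in>{1..<N}. y a a * E a a i j) = (\<Sum>a\<in>{1..<N}. if a = i then (if i = j then y i i else 0) else 0)"
      by (rule sum.cong) (auto simp: E_apply)
    then show ?thesis
      by (simp add: sum.delta)
  qed
  moreover have "(\<Sum>a\<in>{1..<N}. msmult (y a a) (E a a - E N N)) i j
      = (\<Sum>a\<in>{1..<N}. y a a * E a a i j) - (\<Sum>a\<in>{1..<N}. y a a) * E N N i j"
    by (simp add: sum_fun_apply sum_subtractf right_diff_distrib sum_distrib_right)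
  ultimately show "mdiag y i j = (\<Sum>a\<in>{1..<N}. msmult (y a a) (E a a - E N N)) i j"
    using assms(1) by (auto simp: mdiag_def E_apply gl_iff)
qed

lemma dim_linear_image:
  assumes f: "Vector_Spaces.linear msmult msmult f"
    and B: "B \<subseteq> S" "S \<subseteq> mat.span B" "mat.independent B"
    and S: "mat.subspace S" and inj: "inj_on f S"
  shows "mat.dim (f ` S) = card B"
proof -
  interpret f: Vector_Spaces.linear msmult msmult f
    by (fact f)
  have span: "mat.span B = S"
    using B(1,2) S by (rule mat.span_subspace)
  show ?thesis
  proof (rule mat.dim_unique)
    show "f ` B \<subseteq> f ` S" "f ` S \<subseteq> mat.span (f ` B)"
      using B by (auto simp: f.span_image span)
    show "mat.independent (f ` B)"
      using B(3) inj span by (intro f.independent_injective_image) simp_all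
    show "card (f ` B) = card B"
      using inj B(1) by (intro card_image) (rule inj_on_subset)
  qed
qed

lemma card_strict_pairs: "2 * card {(a, b). 1 \<le> a \<and> a < b \<and> b \<le> (n::nat)} = n * (n - 1)"
proof (induct n)
  case (Suc n)
  have "{(a, b). 1 \<le> a \<and> a < b \<and> b \<le> Suc n}
      = {(a, b). 1 \<le> a \<and> a < b \<and> b \<le> n} \<union> (\<lambda>a. (a, Suc n)) ` {1..n}"
    by auto
  moreover have "finite {(a, b). 1 \<le> a \<and> a < b \<and> b \<le> n}"
    by (rule finite_subset[of _ "{1..n} \<times> {1..n}"]) auto
  moreover have "card ((\<lambda>a. (a, Suc n)) ` {1..n}) = n"
    by (subst card_image) (auto simp: inj_on_def)
  moreover have "{(a, b). 1 \<le> a \<and> a < b \<and> b \<le> n} \<inter> (\<lambda>a. (a, Suc n)) ` {1..n} = {}"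
    by auto
  ultimately have "2 * card {(a, b). 1 \<le> a \<and> a < b \<and> b \<le> Suc n}
      = 2 * card {(a, b). 1 \<le> a \<and> a < b \<and> b \<le> n} + 2 * n"
    by (simp add: card_Un_disjoint)
  also have "\<dots> = Suc n * (Suc n - 1)"
    using Suc by (cases n) (auto simp: algebra_simps)
  finally show ?case .
next
  case 0
  have "{(a, b). 1 \<le> a \<and> a < b \<and> b \<le> (0::nat)} = {}"
    by auto
  then show ?case
    by (simp only: card.empty mult_0_right mult_0)
qed

section \<open>Upper triangular matrices\<close>

definition upper_triangular :: "nat \<Rightarrow> cmat \<Rightarrow> bool" where
  "upper_triangular N A \<longleftrightarrow> A \<in> gl N \<and> (\<forall>i j. j < i \<longrightarrow> A i j = 0)"

lemma borel_iff: "A \<in> borel N \<longleftrightarrow> upper_triangular N A \<and> mtrace N A = 0"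
  by (auto simp: borel_def sl_def upper_triangular_def)

lemma upper_triangular_outside:
  "upper_triangular N A \<Longrightarrow> i \<notin> {1..N} \<or> j \<notin> {1..N} \<Longrightarrow> A i j = 0"
  by (auto simp: upper_triangular_def gl_iff)

lemma upper_triangular_gl: "upper_triangular N A \<Longrightarrow> A \<in> gl N"
  by (simp add: upper_triangular_def)

lemma upper_triangular_below: "upper_triangular N A \<Longrightarrow> j < i \<Longrightarrow> A i j = 0"
  by (auto simp: upper_triangular_def)

lemma upper_triangular_add: "upper_triangular N A \<Longrightarrow> upper_triangular N B \<Longrightarrow> upper_triangular N (A + B)"
  by (simp add: upper_triangular_def gl_iff)

lemma upper_triangular_diff: "upper_triangular N A \<Longrightarrow> upper_triangular N B \<Longrightarrow> upper_triangular N (A - B)"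
  by (simp add: upper_triangular_def gl_iff)

lemma upper_triangular_smult: "upper_triangular N A \<Longrightarrow> upper_triangular N (msmult c A)"
  by (simp add: upper_triangular_def gl_iff)

lemma upper_triangular_mmult:
  assumes "upper_triangular N A" "upper_triangular N B"
  shows "upper_triangular N (mmult N A B)"
proof -
  have "mmult N A B i k = 0" if "k < i" for i k
    unfolding mmult_def using assms that
    by (intro sum.neutral) (metis less_trans linorder_neqE_nat mult_not_zero upper_triangular_below)
  then show ?thesis
    using assms by (simp add: upper_triangular_def mmult_gl)
qed

lemma mmult_diag_upper_triangular:
  assumes "upper_triangular N A" "upper_triangular N B"
  shows "mmult N A B i i = A i i * B i i"
proof -
  have "mmult N A B i i = (\<Sum>j\<in>{1..N}. if j = i then A i i * B i i else 0)"
    unfolding mmult_def using assms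
    by (intro sum.cong) (auto dest: upper_triangular_below simp: linorder_neq_iff)
  then show ?thesis
    using assms by (auto simp: sum.delta' upper_triangular_outside)
qed

lemma mmult_superdiag_upper_triangular:
  assumes "upper_triangular N A" "upper_triangular N B"
  shows "mmult N A B i (Suc i) = A i i * B i (Suc i) + A i (Suc i) * B (Suc i) (Suc i)"
proof -
  have "A i j * B j (Suc i) = (if j = i then A i i * B i (Suc i) else 0)
          + (if j = Suc i then A i (Suc i) * B (Suc i) (Suc i) else 0)" for j
  proof (cases "j = i \<or> j = Suc i")
    case False
    then have "j < i \<or> Suc i < j" by auto
    then show ?thesis using False assms by (auto dest: upper_triangular_below)
  qed auto
  then have "mmult N A B i (Suc i) = (\<Sum>j\<in>{1..N}. (if j = i then A i i * B i (Suc i) else 0)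
          + (if j = Suc i then A i (Suc i) * B (Suc i) (Suc i) else 0))"
    unfolding mmult_def by (intro sum.cong refl)
  also have "\<dots> = A i i * B i (Suc i) + A i (Suc i) * B (Suc i) (Suc i)"
    using assms by (auto simp: sum.distrib sum.delta' upper_triangular_outside)
  finally show ?thesis .
qed

definition twisted_borel :: "nat \<Rightarrow> nat set \<Rightarrow> (nat \<Rightarrow> complex) \<Rightarrow> cmat set" where
  "twisted_borel N J s =
     {A \<in> borel N. \<forall>j\<in>J. A j (Suc j) = s j * (A (Suc j) (Suc j) - A j j)}"

lemma galg_eq_twisted_borel: "galg N = twisted_borel N {N div 2 + 1..N - 1} (\<lambda>_. 0)"
  by (auto simp: galg_def twisted_borel_def)

lemma twisted_borel_subset_borel: "twisted_borel N J s \<subseteq> borel N"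
  by (auto simp: twisted_borel_def)

lemma lie_subalgebra_twisted_borel_0: "lie_subalgebra N (twisted_borel N J (\<lambda>_. 0))"
  unfolding lie_subalgebra_def
proof (intro conjI ballI allI)
  show "twisted_borel N J (\<lambda>_. 0) \<subseteq> sl N"
    by (auto simp: twisted_borel_def borel_def)
  show "0 \<in> twisted_borel N J (\<lambda>_. 0)"
    by (simp add: twisted_borel_def borel_iff upper_triangular_def gl_iff mtrace_def)
  fix A B assume A: "A \<in> twisted_borel N J (\<lambda>_. 0)" and B: "B \<in> twisted_borel N J (\<lambda>_. 0)"
  then have ut: "upper_triangular N A" "upper_triangular N B"
    by (auto simp: twisted_borel_def borel_iff)
  show "A + B \<in> twisted_borel N J (\<lambda>_. 0)"
    using A B by (simp add: twisted_borel_def borel_iff upper_triangular_add mtrace_add)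
  have "bracket N A B i i = 0" for i
    using ut by (simp add: bracket_def mmult_diag_upper_triangular)
  moreover have "bracket N A B j (Suc j) = 0" if "j \<in> J" for j
    using A B ut that
    by (simp add: twisted_borel_def bracket_def mmult_superdiag_upper_triangular)
  ultimately show "bracket N A B \<in> twisted_borel N J (\<lambda>_. 0)"
    using ut by (simp add: twisted_borel_def borel_iff bracket_def mtrace_def
        upper_triangular_diff upper_triangular_mmult)
next
  fix x A assume "A \<in> twisted_borel N J (\<lambda>_. 0)"
  then show "msmult x A \<in> twisted_borel N J (\<lambda>_. 0)"
    by (simp add: twisted_borel_def borel_iff upper_triangular_smult mtrace_smult)
qed

section \<open>Conjugation by unipotent bidiagonal matrices\<close>

definition mconj :: "nat \<Rightarrow> cmat \<Rightarrow> cmat \<Rightarrow> cmat \<Rightarrow> cmat" where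
  "mconj N P Q A = mmult N P (mmult N A Q)"

lemma mconj_add: "mconj N P Q (A + B) = mconj N P Q A + mconj N P Q B"
  by (simp add: mconj_def mmult_add_left mmult_add_right)

lemma mconj_smult: "mconj N P Q (msmult c A) = msmult c (mconj N P Q A)"
  by (simp add: mconj_def mmult_smult_left mmult_smult_right)

lemma mconj_diff: "mconj N P Q (A - B) = mconj N P Q A - mconj N P Q B"
  by (simp add: mconj_def mmult_diff_left mmult_diff_right)

lemma linear_mconj: "Vector_Spaces.linear msmult msmult (mconj N P Q)"
  by (simp add: Vector_Spaces.linear_iff mat.vector_space_axioms mconj_add mconj_smult)

lemma mconj_gl: "P \<in> gl N \<Longrightarrow> Q \<in> gl N \<Longrightarrow> mconj N P Q A \<in> gl N"
  by (auto simp: mconj_def mmult_def gl_iff)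

context
  fixes N :: nat and P Q :: cmat
  assumes P: "P \<in> gl N" and Q: "Q \<in> gl N" and QP: "mmult N Q P = Id N"
begin

lemma mconj_mmult:
  "A \<in> gl N \<Longrightarrow> B \<in> gl N \<Longrightarrow> mmult N (mconj N P Q A) (mconj N P Q B) = mconj N P Q (mmult N A B)"
  by (simp add: mconj_def mmult_assoc mmult_gl Q flip: mmult_assoc[of N Q P] add: QP mmult_Id_left)

lemma mconj_bracket:
  "A \<in> gl N \<Longrightarrow> B \<in> gl N \<Longrightarrow> mconj N P Q (bracket N A B) = bracket N (mconj N P Q A) (mconj N P Q B)"
  by (simp add: bracket_def mconj_diff mconj_mmult)

lemma mconj_mconj_inverse: "A \<in> gl N \<Longrightarrow> mconj N Q P (mconj N P Q A) = A"
  unfolding mconj_def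
  by (simp add: mmult_assoc QP mmult_Id_right flip: mmult_assoc[of N Q P])
     (simp add: mmult_assoc QP mmult_Id_left mmult_gl P)

lemma mtrace_mconj: "A \<in> gl N \<Longrightarrow> mtrace N (mconj N P Q A) = mtrace N A"
  unfolding mconj_def
  by (simp add: mtrace_mmult_commute[of N P] mmult_assoc QP mmult_Id_right)

lemma lie_hom_on_mconj: "g \<subseteq> gl N \<Longrightarrow> lie_hom_on N g (mconj N P Q)"
  unfolding lie_hom_on_def by (auto simp: mconj_add mconj_smult intro!: mconj_bracket)

lemma inj_on_mconj: "g \<subseteq> gl N \<Longrightarrow> inj_on (mconj N P Q) g"
  by (metis inj_onI mconj_mconj_inverse subsetD)

lemma lie_subalgebra_mconj_image:
  assumes g: "lie_subalgebra N g"
  shows "lie_subalgebra N (mconj N P Q ` g)"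
proof -
  have gl: "g \<subseteq> gl N"
    using g by (auto simp: lie_subalgebra_def sl_def)
  have "mconj N P Q ` g \<subseteq> sl N"
    using g gl by (auto simp: lie_subalgebra_def sl_def mconj_gl P Q mtrace_mconj)
  moreover have "mconj N P Q 0 = 0"
    by (simp add: mconj_def mmult_def fun_eq_iff)
  moreover have "bracket N (mconj N P Q a) (mconj N P Q b) \<in> mconj N P Q ` g"
    if "a \<in> g" "b \<in> g" for a b
    using g gl that by (metis image_eqI lie_subalgebra_def mconj_bracket subsetD)
  ultimately show ?thesis
    using g unfolding lie_subalgebra_def
    by (auto simp flip: mconj_add mconj_smult intro!: imageI)
qed

end

lemma mconj_diag:
  assumes "upper_triangular N P" "upper_triangular N Q" "upper_triangular N A"
    and "\<forall>i\<in>{1..N}. P i i = 1 \<and> Q i i = 1"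
  shows "mconj N P Q A i i = A i i"
  using assms
  by (cases "i \<in> {1..N}")
     (auto simp: mconj_def mmult_diag_upper_triangular upper_triangular_mmult upper_triangular_outside)

lemma mconj_superdiag:
  assumes ut: "upper_triangular N P" "upper_triangular N Q" "upper_triangular N A"
    and diag: "\<forall>i\<in>{1..N}. P i i = 1 \<and> Q i i = 1"
    and sup: "Q j (Suc j) = - P j (Suc j)"
    and j: "1 \<le> j" "Suc j \<le> N"
  shows "mconj N P Q A j (Suc j) = A j (Suc j) + P j (Suc j) * (A (Suc j) (Suc j) - A j j)"
proof -
  have "upper_triangular N (mmult N A Q)"
    using ut(3,2) by (rule upper_triangular_mmult)
  then show ?thesis
    using ut diag sup j
    by (simp add: mconj_def mmult_superdiag_upper_triangular mmult_diag_upper_triangular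
        algebra_simps)
qed

definition bidiag :: "nat \<Rightarrow> (nat \<Rightarrow> complex) \<Rightarrow> cmat" where
  "bidiag N s = (\<lambda>a b. if a \<in> {1..N} \<and> b \<in> {1..N}
                       then (if b = a then 1 else if b = Suc a then s a else 0) else 0)"

definition bidiag_inv :: "nat \<Rightarrow> (nat \<Rightarrow> complex) \<Rightarrow> cmat" where
  "bidiag_inv N s = (\<lambda>a b. if a \<in> {1..N} \<and> b \<in> {1..N} \<and> a \<le> b then \<Prod>j\<in>{a..<b}. - s j else 0)"

lemma upper_triangular_bidiag: "upper_triangular N (bidiag N s)"
  by (auto simp: upper_triangular_def gl_iff bidiag_def)

lemma upper_triangular_bidiag_inv: "upper_triangular N (bidiag_inv N s)"
  by (auto simp: upper_triangular_def gl_iff bidiag_inv_def)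

lemma bidiag_mmult_bidiag_inv: "mmult N (bidiag N s) (bidiag_inv N s) = Id N"
proof (rule ext, rule ext)
  fix a b
  let ?Q = "bidiag_inv N s"
  have "mmult N (bidiag N s) ?Q a b
      = (\<Sum>c\<in>{1..N}. (if c = a then ?Q a b else 0)
                     + (if c = Suc a \<and> 1 \<le> a then s a * ?Q (Suc a) b else 0))"
    unfolding mmult_def bidiag_def by (rule sum.cong) auto
  also have "\<dots> = ?Q a b + (if 1 \<le> a \<and> Suc a \<le> N then s a * ?Q (Suc a) b else 0)"
    by (auto simp: sum.distrib sum.delta' bidiag_inv_def)
  also have "\<dots> = Id N a b"
  proof -
    consider "b \<le> a" | "a < b" "a \<in> {1..N}" "b \<in> {1..N}" | "a < b" "a \<notin> {1..N} \<or> b \<notin> {1..N}"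
      by linarith
    then show ?thesis
    proof cases
      case 2
      then show ?thesis
        by (simp add: bidiag_inv_def Id_apply prod.atLeast_Suc_lessThan)
    qed (auto simp: bidiag_inv_def Id_apply)
  qed
  finally show "mmult N (bidiag N s) ?Q a b = Id N a b" .
qed

lemma bidiag_inv_mmult_bidiag: "mmult N (bidiag_inv N s) (bidiag N s) = Id N"
proof (rule ext, rule ext)
  fix a b
  let ?Q = "bidiag_inv N s"
  have "mmult N ?Q (bidiag N s) a b
      = (\<Sum>c\<in>{1..N}. (if c = b then ?Q a b else 0)
                     + (if Suc c = b \<and> b \<le> N then ?Q a c * s c else 0))"
    unfolding mmult_def bidiag_def by (rule sum.cong) auto
  also have "\<dots> = ?Q a b + (if 2 \<le> b \<and> b \<le> N then ?Q a (b - 1) * s (b - 1) else 0)"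
  proof -
    have "(\<Sum>c\<in>{1..N}. if Suc c = b \<and> b \<le> N then ?Q a c * s c else 0)
        = (\<Sum>c\<in>{1..N}. if c = b - 1 then (if 2 \<le> b \<and> b \<le> N then ?Q a c * s c else 0) else 0)"
      by (rule sum.cong) auto
    then show ?thesis
      by (auto simp: sum.distrib sum.delta' bidiag_inv_def)
  qed
  also have "\<dots> = Id N a b"
  proof -
    consider "b \<le> a" | "a < b" "a \<in> {1..N}" "b \<in> {1..N}" | "a < b" "a \<notin> {1..N} \<or> b \<notin> {1..N}"
      by linarith
    then show ?thesis
    proof cases
      case 2
      then obtain b' where "b = Suc b'"
        by (cases b) auto
      with 2 show ?thesis
        by (simp add: bidiag_inv_def Id_apply prod.atLeastLessThan_Suc)
    qed (auto simp: bidiag_inv_def Id_apply)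
  qed
  finally show "mmult N ?Q (bidiag N s) a b = Id N a b" .
qed

lemma twisted_borel_cong: "(\<And>j. j \<in> J \<Longrightarrow> s j = s' j) \<Longrightarrow> twisted_borel N J s = twisted_borel N J s'"
  by (simp add: twisted_borel_def)

lemma mconj_twisted_borel:
  assumes A: "A \<in> twisted_borel N J s" and J: "J \<subseteq> {1..<N}"
    and ut: "upper_triangular N P" "upper_triangular N Q"
    and diag: "\<forall>i\<in>{1..N}. P i i = 1 \<and> Q i i = 1"
    and sup: "\<forall>j\<in>J. Q j (Suc j) = - P j (Suc j)"
  shows "mconj N P Q A \<in> twisted_borel N J (\<lambda>j. s j + P j (Suc j))"
proof -
  have utA: "upper_triangular N A" and trA: "mtrace N A = 0"
    and supA: "\<forall>j\<in>J. A j (Suc j) = s j * (A (Suc j) (Suc j) - A j j)"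
    using A by (auto simp: twisted_borel_def borel_iff)
  have "mtrace N (mconj N P Q A) = 0"
    using trA ut utA diag by (simp add: mtrace_def mconj_diag)
  moreover have "upper_triangular N (mconj N P Q A)"
    unfolding mconj_def using ut utA by (intro upper_triangular_mmult)
  moreover have "mconj N P Q A j (Suc j)
      = (s j + P j (Suc j)) * (mconj N P Q A (Suc j) (Suc j) - mconj N P Q A j j)" if "j \<in> J" for j
    using supA J that ut utA diag sup by (auto simp: mconj_superdiag mconj_diag algebra_simps)
  ultimately show ?thesis
    by (simp add: twisted_borel_def borel_iff)
qed

lemma mconj_bidiag_twisted_borel:
  assumes J: "J \<subseteq> {1..<N}"
  shows "mconj N (bidiag N s) (bidiag_inv N s) ` twisted_borel N J (\<lambda>_. 0) = twisted_borel N J s"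
proof
  let ?P = "bidiag N s" and ?Q = "bidiag_inv N s"
  have ut: "upper_triangular N ?P" "upper_triangular N ?Q"
    by (rule upper_triangular_bidiag upper_triangular_bidiag_inv)+
  have diag: "\<forall>i\<in>{1..N}. ?P i i = 1 \<and> ?Q i i = 1"
    by (simp add: bidiag_def bidiag_inv_def)
  have sup: "?P j (Suc j) = s j" "?Q j (Suc j) = - s j" if "j \<in> J" for j
    using J that by (auto simp: bidiag_def bidiag_inv_def)
  show "mconj N ?P ?Q ` twisted_borel N J (\<lambda>_. 0) \<subseteq> twisted_borel N J s"
  proof (rule image_subsetI)
    fix A assume A: "A \<in> twisted_borel N J (\<lambda>_. 0)"
    have "mconj N ?P ?Q A \<in> twisted_borel N J (\<lambda>j. 0 + ?P j (Suc j))"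
      by (rule mconj_twisted_borel[OF A J ut diag]) (simp add: sup)
    also have "twisted_borel N J (\<lambda>j. 0 + ?P j (Suc j)) = twisted_borel N J s"
      by (rule twisted_borel_cong) (simp add: sup)
    finally show "mconj N ?P ?Q A \<in> twisted_borel N J s" .
  qed
  show "twisted_borel N J s \<subseteq> mconj N ?P ?Q ` twisted_borel N J (\<lambda>_. 0)"
  proof
    fix B assume B: "B \<in> twisted_borel N J s"
    have "mconj N ?Q ?P B \<in> twisted_borel N J (\<lambda>j. s j + ?Q j (Suc j))"
      using mconj_twisted_borel[OF B J ut(2,1)] diag sup by simp
    then have "mconj N ?Q ?P B \<in> twisted_borel N J (\<lambda>_. 0)"
      using sup twisted_borel_cong[of J "\<lambda>j. s j + ?Q j (Suc j)" "\<lambda>_. 0" N] by simp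
    moreover have "B \<in> gl N"
      using B by (auto simp: twisted_borel_def borel_iff upper_triangular_def)
    then have "mconj N ?P ?Q (mconj N ?Q ?P B) = B"
      using ut by (intro mconj_mconj_inverse) (auto simp: upper_triangular_def bidiag_mmult_bidiag_inv)
    ultimately show "B \<in> mconj N ?P ?Q ` twisted_borel N J (\<lambda>_. 0)"
      by (metis image_eqI)
  qed
qed

section \<open>Skew tensors and the induced map\<close>

definition skew_tensor :: "ctens \<Rightarrow> bool" where
  "skew_tensor T \<longleftrightarrow> (\<forall>i j k l. T k l i j = - T i j k l)"

lemma in_wedge2_iff: "in_wedge2 c r \<longleftrightarrow> in_tensor2 c r \<and> skew_tensor r"
  by (simp add: in_wedge2_def skew_tensor_def)

lemma skew_tensorD: "skew_tensor T \<Longrightarrow> T k l i j = - T i j k l"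
  unfolding skew_tensor_def by blast

lemma skew_tensor_wedge: "skew_tensor (wedge a b)"
  unfolding skew_tensor_def wedge_def tens_def by simp

lemma skew_tensor_tsmult: "skew_tensor T \<Longrightarrow> skew_tensor (tsmult c T)"
  unfolding skew_tensor_def tsmult_def by (metis mult_minus_right)

lemma skew_tensor_add: "skew_tensor T \<Longrightarrow> skew_tensor U \<Longrightarrow> skew_tensor (T + U)"
  unfolding skew_tensor_def plus_fun_apply by (metis minus_add_distrib)

lemma skew_tensor_sum: "(\<And>x. x \<in> A \<Longrightarrow> skew_tensor (f x)) \<Longrightarrow> skew_tensor (\<Sum>x\<in>A. f x)"
proof (induct A rule: infinite_finite_induct)
  case (insert x A)
  then have "skew_tensor (f x + sum f A)"
    by (intro skew_tensor_add) auto
  then show ?case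
    unfolding sum.insert[OF insert(1,2)] .
qed (simp_all add: skew_tensor_def)

lemma tsmult_add: "tsmult c (T + U) = tsmult c T + tsmult c U"
  by (simp add: tsmult_def fun_eq_iff distrib_left)

lemma tsmult_zero: "tsmult c 0 = 0"
  by (simp add: tsmult_def fun_eq_iff)

lemma in_tensor2_add: "in_tensor2 S T \<Longrightarrow> in_tensor2 S U \<Longrightarrow> in_tensor2 S (T + U)"
  unfolding in_tensor2_def by (metis map_append set_append sum_list_append Un_subset_iff)

lemma in_tensor2_sum: "(\<And>x. x \<in> A \<Longrightarrow> in_tensor2 S (f x)) \<Longrightarrow> in_tensor2 S (\<Sum>x\<in>A. f x)"
proof (induct A rule: infinite_finite_induct)
  case (infinite A)
  then show ?case
    unfolding in_tensor2_def by (metis empty_subsetI list.set(1) list.simps(8) sum.infinite sum_list.Nil)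
next
  case empty
  then show ?case
    unfolding in_tensor2_def by (metis empty_subsetI list.set(1) list.simps(8) sum.empty sum_list.Nil)
qed (simp add: in_tensor2_add)

lemma in_tensor2_tens: "a \<in> S \<Longrightarrow> b \<in> S \<Longrightarrow> in_tensor2 S (tens a b)"
  unfolding in_tensor2_def by (rule exI[of _ "[(a, b)]"]) simp

lemma in_tensor2_tsmult:
  assumes S: "mat.subspace S" and T: "in_tensor2 S T"
  shows "in_tensor2 S (tsmult c T)"
proof -
  obtain ps where ps: "set ps \<subseteq> S \<times> S" "T = (\<Sum>(a, b)\<leftarrow>ps. tens a b)"
    using T unfolding in_tensor2_def by blast
  have "tsmult c T = (\<Sum>(a, b)\<leftarrow>map (\<lambda>(a, b). (msmult c a, b)) ps. tens a b)"
    unfolding ps(2)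
    by (induct ps) (auto simp: tsmult_def tens_def fun_eq_iff distrib_left mult.assoc)
  moreover have "set (map (\<lambda>(a, b). (msmult c a, b)) ps) \<subseteq> S \<times> S"
    using ps(1) mat.subspace_scale[OF S] by auto
  ultimately show ?thesis
    unfolding in_tensor2_def by blast
qed

lemma in_tensor2_wedge:
  assumes "mat.subspace S" "a \<in> S" "b \<in> S"
  shows "in_tensor2 S (wedge a b)"
proof -
  have "wedge a b = tens a b + tsmult (- 1) (tens b a)"
    by (simp add: wedge_def tens_def tsmult_def fun_eq_iff)
  then show ?thesis
    using assms by (simp add: in_tensor2_add in_tensor2_tens in_tensor2_tsmult)
qed

lemma induced_map_add: "induced_map N (T + U) F = induced_map N T F + induced_map N U F"
  by (simp add: induced_map_def fun_eq_iff distrib_left sum.distrib)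

lemma induced_map_tens: "induced_map N (tens a b) F = msmult (pairing N F a) b"
  by (simp add: induced_map_def pairing_def tens_def fun_eq_iff sum_distrib_right mult.assoc)

lemma induced_map_in_subspace:
  assumes S: "mat.subspace S" and T: "in_tensor2 S T"
  shows "induced_map N T F \<in> S"
proof -
  obtain ps where ps: "set ps \<subseteq> S \<times> S" "T = (\<Sum>(a, b)\<leftarrow>ps. tens a b)"
    using T unfolding in_tensor2_def by blast
  have "induced_map N (\<Sum>(a, b)\<leftarrow>ps. tens a b) F \<in> S" if "set ps \<subseteq> S \<times> S" for ps
    using that
  proof (induct ps)
    case Nil
    have "induced_map N (\<Sum>(a, b)\<leftarrow>[]. tens a b) F = 0"
      by (simp add: induced_map_def fun_eq_iff)
    then show ?case
      using mat.subspace_0[OF S] by (simp only:)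
  next
    case (Cons p ps)
    obtain a b where p: "p = (a, b)"
      by fastforce
    have "induced_map N (\<Sum>(a, b)\<leftarrow>p # ps. tens a b) F
        = msmult (pairing N F a) b + induced_map N (\<Sum>(a, b)\<leftarrow>ps. tens a b) F"
      by (simp only: p list.map sum_list.Cons prod.case induced_map_add induced_map_tens)
    moreover have "msmult (pairing N F a) b + induced_map N (\<Sum>(a, b)\<leftarrow>ps. tens a b) F \<in> S"
      using Cons p by (intro mat.subspace_add[OF S] mat.subspace_scale[OF S]) auto
    ultimately show ?case
      by (simp only:)
  qed
  then show ?thesis
    using ps by simp
qed

lemma subspace_range_induced_map: "mat.subspace (range (induced_map N T))"
proof (rule mat.subspaceI)
  have "induced_map N T F + induced_map N T G = induced_map N T (F + G)" for F G
    by (simp add: induced_map_def fun_eq_iff distrib_right sum.distrib)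
  moreover have "msmult c (induced_map N T F) = induced_map N T (msmult c F)" for c F
    by (simp add: induced_map_def fun_eq_iff sum_distrib_left mult.assoc)
  ultimately show "x + y \<in> range (induced_map N T)" "msmult c x \<in> range (induced_map N T)"
    if "x \<in> range (induced_map N T)" "y \<in> range (induced_map N T)" for c x y
    using that by auto
  show "0 \<in> range (induced_map N T)"
    by (rule range_eqI[of _ _ 0]) (simp add: induced_map_def fun_eq_iff)
qed

lemma induced_map_E:
  assumes "a \<in> {1..N}" "b \<in> {1..N}"
  shows "induced_map N T (E a b) = T a b"
proof (intro ext)
  fix k l
  have "(\<Sum>j\<in>{1..N}. E a b i j * T i j k l) = (if i = a then T a b k l else 0)" for i
    using assms(2) by (cases "i = a") (simp_all add: E_apply if_distrib[of "\<lambda>x. x * _"] sum.delta cong: if_cong)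
  then show "induced_map N T (E a b) k l = T a b k l"
    using assms(1) by (simp add: induced_map_def sum.delta)
qed

lemma sum_swap_index_pairs:
  "(\<Sum>k\<in>A. \<Sum>l\<in>A. \<Sum>i\<in>A. \<Sum>j\<in>A. f i j k l) = (\<Sum>i\<in>A. \<Sum>j\<in>A. \<Sum>k\<in>A. \<Sum>l\<in>A. f i j k l)"
proof -
  have "(\<Sum>k\<in>A. \<Sum>l\<in>A. \<Sum>i\<in>A. \<Sum>j\<in>A. f i j k l) = (\<Sum>k\<in>A. \<Sum>i\<in>A. \<Sum>l\<in>A. \<Sum>j\<in>A. f i j k l)"
    by (rule sum.cong[OF refl], rule sum.swap)
  also have "\<dots> = (\<Sum>i\<in>A. \<Sum>k\<in>A. \<Sum>l\<in>A. \<Sum>j\<in>A. f i j k l)"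
    by (rule sum.swap)
  also have "\<dots> = (\<Sum>i\<in>A. \<Sum>k\<in>A. \<Sum>j\<in>A. \<Sum>l\<in>A. f i j k l)"
    by (rule sum.cong[OF refl], rule sum.cong[OF refl], rule sum.swap)
  also have "\<dots> = (\<Sum>i\<in>A. \<Sum>j\<in>A. \<Sum>k\<in>A. \<Sum>l\<in>A. f i j k l)"
    by (rule sum.cong[OF refl], rule sum.swap)
  finally show ?thesis .
qed

lemma pairing_induced_map_skew:
  assumes "skew_tensor T"
  shows "pairing N F (induced_map N T G) = - pairing N G (induced_map N T F)"
proof -
  have T: "induced_map N T F i j = - (\<Sum>k\<in>{1..N}. \<Sum>l\<in>{1..N}. F k l * T i j k l)" for i j
  proof -
    have "induced_map N T F i j = (\<Sum>k\<in>{1..N}. \<Sum>l\<in>{1..N}. - (F k l * T i j k l))"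
      unfolding induced_map_def
      by (rule sum.cong[OF refl], rule sum.cong[OF refl]) (simp add: skew_tensorD[OF assms, of _ _ i j])
    then show ?thesis
      by (simp add: sum_negf)
  qed
  have "pairing N F (induced_map N T G) =
     (\<Sum>k\<in>{1..N}. \<Sum>l\<in>{1..N}. \<Sum>i\<in>{1..N}. \<Sum>j\<in>{1..N}. F k l * G i j * T i j k l)"
    unfolding pairing_def induced_map_def
    by (rule sum.cong[OF refl], rule sum.cong[OF refl]) (simp add: sum_distrib_left mult.assoc)
  also have "\<dots> = (\<Sum>i\<in>{1..N}. \<Sum>j\<in>{1..N}. \<Sum>k\<in>{1..N}. \<Sum>l\<in>{1..N}. F k l * G i j * T i j k l)"
    by (rule sum_swap_index_pairs)
  also have "\<dots> = - pairing N G (induced_map N T F)"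
    unfolding pairing_def T
    by (simp add: sum_distrib_left mult.assoc mult.commute mult.left_commute flip: sum_negf)
  finally show ?thesis .
qed

lemma subspace_lie_subalgebra: "lie_subalgebra N c \<Longrightarrow> mat.subspace c"
  by (simp add: lie_subalgebra_def mat.subspace_def)

(* By skew-symmetry of r, F kills the image of the induced map as soon as F lies in its kernel. *)

lemma nondegenerate_if_range_induced_map:
  assumes c: "mat.subspace c" and r: "in_wedge2 c r" and onto: "c \<subseteq> range (induced_map N r)"
  shows "nondegenerate N c r"
  unfolding nondegenerate_def
proof (intro conjI allI impI ballI)
  show "in_wedge2 c r" "induced_map N r F \<in> c" for F
    using r c by (auto simp: in_wedge2_iff intro: induced_map_in_subspace)
  show "\<exists>F. induced_map N r F = y" if "y \<in> c" for y
    using onto that by blast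
  fix F a assume F: "induced_map N r F = 0" and "a \<in> c"
  then obtain G where G: "a = induced_map N r G"
    using onto by blast
  have "pairing N F a = - pairing N G (induced_map N r F)"
    unfolding G using r by (intro pairing_induced_map_skew) (simp add: in_wedge2_iff)
  also have "\<dots> = 0"
    unfolding F by (simp add: pairing_def)
  finally show "pairing N F a = 0" .
qed

lemma is_carrier_if_range_induced_map:
  assumes c: "lie_subalgebra N c" and r: "in_wedge2 c r" and onto: "c \<subseteq> range (induced_map N r)"
  shows "is_carrier N r c"
  unfolding is_carrier_def
proof (intro conjI allI impI)
  fix d assume "lie_subalgebra N d \<and> in_wedge2 d r"
  then have "range (induced_map N r) \<subseteq> d"
    by (auto simp: in_wedge2_iff intro: induced_map_in_subspace subspace_lie_subalgebra)
  then show "c \<subseteq> d"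
    using onto by blast
qed (use c r in auto)

lemma sum_wedge_split_last:
  "(\<Sum>s\<in>{k + 2..N - k - 1}. wedge (E (k + 1) s) (E s (N - k)))
   = (\<Sum>s\<in>{k + 2..N - k - 2}. wedge (E (k + 1) s) (E s (N - k)))
     + (if 2 * k + 3 \<le> N then wedge (E (k + 1) (N - k - 1)) (E (N - k - 1) (N - k)) else 0)"
proof (cases "2 * k + 3 \<le> N")
  case True
  then have "{k + 2..N - k - 1} = insert (N - k - 1) {k + 2..N - k - 2}"
    and "N - k - 1 \<notin> {k + 2..N - k - 2}"
    by auto
  with True show ?thesis
    by (simp add: add.commute)
qed simp

section \<open>The conjugated algebra\<close>

locale rmatrix =
  fixes N :: nat and nu rho :: "nat \<Rightarrow> complex"
  assumes N_ge_3: "3 \<le> N"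
    and nu_nonzero: "\<forall>k\<in>{1..N div 2}. nu k \<noteq> 0"
    and rho_nonzero: "\<forall>i\<in>{1..(N + 1) div 2 - 1}. rho i \<noteq> 0"
begin

definition z :: nat where "z = N div 2"

lemma z_bounds: "1 \<le> z" "2 * z \<le> N" "N \<le> 2 * z + 1" "(N + 1) div 2 = N - z"
  using N_ge_3 by (auto simp: z_def)

lemma nu_nonzero': "1 \<le> p \<Longrightarrow> p \<le> z \<Longrightarrow> nu p \<noteq> 0"
  using nu_nonzero by (auto simp: z_def)

lemma rho_nonzero': "1 \<le> i \<Longrightarrow> i \<le> N - z - 1 \<Longrightarrow> rho i \<noteq> 0"
  using rho_nonzero z_bounds(4) by auto

(* The twist makes nu_i E_{N-i,N+1-i} - rho_i Hperp_i, the combination that pairs with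
   E_{i,N-i} in r, an element of the algebra. *)
definition twist :: "nat \<Rightarrow> complex" where
  "twist j = - nu (N - j) / rho (N - j)"

definition phi :: "cmat \<Rightarrow> cmat" where
  "phi = mconj N (bidiag N twist) (bidiag_inv N twist)"

definition c_alg :: "cmat set" where
  "c_alg = twisted_borel N {z + 1..N - 1} twist"

lemma c_alg_iff:
  "A \<in> c_alg \<longleftrightarrow> upper_triangular N A \<and> mtrace N A = 0 \<and>
     (\<forall>j. z + 1 \<le> j \<and> j \<le> N - 1 \<longrightarrow> A j (Suc j) = twist j * (A (Suc j) (Suc j) - A j j))"
  by (auto simp: c_alg_def twisted_borel_def borel_iff)

lemma galg_subset_gl: "galg N \<subseteq> gl N"
  by (auto simp: galg_def borel_def sl_def)

lemma phi_galg: "phi ` galg N = c_alg"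
  unfolding phi_def c_alg_def galg_eq_twisted_borel z_def[symmetric]
  using z_bounds by (intro mconj_bidiag_twisted_borel) auto

lemma lie_hom_on_phi: "lie_hom_on N (galg N) phi"
  unfolding phi_def using galg_subset_gl
  by (intro lie_hom_on_mconj upper_triangular_gl upper_triangular_bidiag upper_triangular_bidiag_inv
      bidiag_inv_mmult_bidiag)

lemma inj_on_phi: "inj_on phi (galg N)"
  unfolding phi_def using galg_subset_gl
  by (intro inj_on_mconj upper_triangular_gl upper_triangular_bidiag upper_triangular_bidiag_inv
      bidiag_inv_mmult_bidiag)

lemma lie_subalgebra_c_alg: "lie_subalgebra N c_alg"
  unfolding phi_galg[symmetric] unfolding phi_def galg_eq_twisted_borel z_def[symmetric]
  by (intro lie_subalgebra_mconj_image lie_subalgebra_twisted_borel_0 upper_triangular_gl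
      upper_triangular_bidiag upper_triangular_bidiag_inv bidiag_inv_mmult_bidiag)

lemma subspace_c_alg: "mat.subspace c_alg"
  by (rule subspace_lie_subalgebra[OF lie_subalgebra_c_alg])

lemma c_alg_subset_borel: "c_alg \<subseteq> borel N"
  by (simp add: c_alg_def twisted_borel_subset_borel)

definition root_pairs :: "(nat \<times> nat) set" where
  "root_pairs = {(a, b). 1 \<le> a \<and> a < b \<and> b \<le> N \<and> \<not> (z + 1 \<le> a \<and> b = Suc a)}"

lemma finite_root_pairs: "finite root_pairs"
  by (rule finite_subset[of _ "{1..N} \<times> {1..N}"]) (auto simp: root_pairs_def)

lemma E_in_twisted_borel:
  assumes "(a, b) \<in> root_pairs"
  shows "E a b \<in> twisted_borel N {z + 1..N - 1} s"
proof -
  have "mtrace N (E a b) = 0"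
    using assms unfolding mtrace_def E_apply by (intro sum.neutral) (auto simp: root_pairs_def)
  then show ?thesis
    using assms
    by (auto simp: twisted_borel_def borel_iff upper_triangular_def gl_iff E_apply root_pairs_def)
qed

lemma E_in_c_alg: "(a, b) \<in> root_pairs \<Longrightarrow> E a b \<in> c_alg"
  unfolding c_alg_def by (rule E_in_twisted_borel)

definition lift_diag :: "cmat \<Rightarrow> cmat" where
  "lift_diag h = (\<lambda>a b. h a b +
     (if z + 1 \<le> a \<and> a \<le> N - 1 \<and> b = Suc a then twist a * (h (Suc a) (Suc a) - h a a) else 0))"

lemma lift_diag_add: "lift_diag (x + y) = lift_diag x + lift_diag y"
  by (simp add: lift_diag_def fun_eq_iff algebra_simps)

lemma lift_diag_diff: "lift_diag (x - y) = lift_diag x - lift_diag y"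
  by (simp add: lift_diag_def fun_eq_iff algebra_simps)

lemma lift_diag_uminus: "lift_diag (- x) = - lift_diag x"
  by (simp add: lift_diag_def fun_eq_iff algebra_simps)

lemma lift_diag_smult: "lift_diag (msmult c x) = msmult c (lift_diag x)"
  by (simp add: lift_diag_def fun_eq_iff algebra_simps)

lemma lift_diag_sum: "lift_diag (\<Sum>x\<in>S. f x) = (\<Sum>x\<in>S. lift_diag (f x))"
proof (induct S rule: infinite_finite_induct)
  case (insert x S)
  then show ?case
    by (simp only: sum.insert[OF insert(1,2)] lift_diag_add)
qed (simp_all add: lift_diag_def fun_eq_iff)

lemma lift_diag_in_c_alg:
  assumes "h \<in> gl N" "\<And>a b. a \<noteq> b \<Longrightarrow> h a b = 0" "mtrace N h = 0"
  shows "lift_diag h \<in> c_alg"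
proof -
  have "upper_triangular N (lift_diag h)"
    using assms(1,2) z_bounds by (auto simp: upper_triangular_def gl_iff lift_diag_def)
  moreover have "mtrace N (lift_diag h) = 0"
    using assms(3) by (simp add: mtrace_def lift_diag_def)
  ultimately show ?thesis
    using assms(2) by (simp add: c_alg_iff lift_diag_def)
qed

lemma lift_diag_HP: "1 \<le> p \<Longrightarrow> p \<le> z \<Longrightarrow> lift_diag (HP N p) = HP N p"
  by (auto simp: lift_diag_def fun_eq_iff HP_apply)

lemma HP_in_c_alg:
  assumes "1 \<le> p" "p \<le> z"
  shows "HP N p \<in> c_alg"
proof -
  have "lift_diag (HP N p) \<in> c_alg"
    using assms z_bounds by (intro lift_diag_in_c_alg mtrace_HP) (auto simp: gl_iff HP_apply)
  then show ?thesis
    using assms by (simp add: lift_diag_HP)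
qed

definition Dperp :: "nat \<Rightarrow> cmat" where
  "Dperp i = msmult (nu i) (E (N - i) (N + 1 - i)) - msmult (rho i) (Hperp N i)"

lemma Dperp_lift_diag:
  assumes "1 \<le> i" "i \<le> N - z - 1"
  shows "Dperp i = msmult (- rho i) (lift_diag (Hperp N i))"
proof (intro ext)
  fix k l
  have i: "2 * i + 1 \<le> N" "i \<le> z"
    using assms z_bounds by auto
  have "twist (N - i) = - nu i / rho i"
    using i by (simp add: twist_def)
  then have "lift_diag (Hperp N i) k l = Hperp N i k l - nu i / rho i * E (N - i) (N + 1 - i) k l"
    using assms i by (auto simp: lift_diag_def Hperp_apply E_apply)
  then show "Dperp i k l = msmult (- rho i) (lift_diag (Hperp N i)) k l"
    using rho_nonzero'[OF assms] by (simp add: Dperp_def field_simps)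
qed

lemma Dperp_in_c_alg:
  assumes "1 \<le> i" "i \<le> N - z - 1"
  shows "Dperp i \<in> c_alg"
proof -
  have "lift_diag (Hperp N i) \<in> c_alg"
    using assms z_bounds by (intro lift_diag_in_c_alg mtrace_Hperp) (auto simp: gl_iff Hperp_apply)
  then show ?thesis
    unfolding Dperp_lift_diag[OF assms] by (rule mat.subspace_scale[OF subspace_c_alg])
qed

section \<open>The tensor r and its slices\<close>

abbreviation r :: ctens where "r \<equiv> r_tensor N nu rho"

(* The last summand s = N-k-1 of each inner sum of r combines with the corresponding
   rho-term into a wedge with Dperp. *)

lemma r_tensor_regroup:
  "r = (\<Sum>k\<in>{0..<z}. tsmult (nu (k + 1)) (wedge (HP N (k + 1)) (E (k + 1) (N - k))
          + (\<Sum>s\<in>{k + 2..N - k - 2}. wedge (E (k + 1) s) (E s (N - k)))))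
     + (\<Sum>k\<in>{..<N - z - 1}. wedge (E (k + 1) (N - k - 1)) (Dperp (Suc k)))"
proof -
  let ?A = "\<lambda>k. wedge (HP N (k + 1)) (E (k + 1) (N - k))"
  let ?B = "\<lambda>k. \<Sum>s\<in>{k + 2..N - k - 2}. wedge (E (k + 1) s) (E s (N - k))"
  let ?C = "\<lambda>k. wedge (E (k + 1) (N - k - 1)) (E (N - k - 1) (N - k))"
  have "(\<Sum>k\<in>{0..<z}. tsmult (nu (k + 1)) (?A k + (\<Sum>s\<in>{k + 2..N - k - 1}. wedge (E (k + 1) s) (E s (N - k)))))
      = (\<Sum>k\<in>{0..<z}. tsmult (nu (k + 1)) (?A k + ?B k))
        + (\<Sum>k\<in>{0..<z}. if 2 * k + 3 \<le> N then tsmult (nu (k + 1)) (?C k) else 0)"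
    unfolding sum_wedge_split_last
    by (simp add: tsmult_add tsmult_zero sum.distrib add.assoc if_distrib[of "tsmult _"] cong: if_cong)
  moreover have "(\<Sum>k\<in>{0..<z}. if 2 * k + 3 \<le> N then tsmult (nu (k + 1)) (?C k) else 0)
      = (\<Sum>k\<in>{..<N - z - 1}. tsmult (nu (k + 1)) (?C k))"
  proof -
    have "{k \<in> {0..<z}. 2 * k + 3 \<le> N} = {..<N - z - 1}"
      using z_bounds by auto
    then show ?thesis
      by (simp flip: sum.inter_filter)
  qed
  moreover have "(\<Sum>i\<in>{1..(N + 1) div 2 - 1}. tsmult (rho i) (wedge (Hperp N i) (E i (N - i))))
      = (\<Sum>k\<in>{..<N - z - 1}. tsmult (rho (Suc k)) (wedge (Hperp N (Suc k)) (E (Suc k) (N - Suc k))))"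
    unfolding z_bounds(4) unfolding One_nat_def by (rule sum.atLeast1_atMost_eq)
  moreover have "tsmult (nu (k + 1)) (?C k) + tsmult (rho (Suc k)) (wedge (Hperp N (Suc k)) (E (Suc k) (N - Suc k)))
      = wedge (E (k + 1) (N - k - 1)) (Dperp (Suc k))" for k
  proof -
    have "N + 1 - Suc k = N - k" "N - Suc k = N - k - 1"
      by auto
    then show ?thesis
      unfolding Dperp_def by (simp add: fun_eq_iff wedge_def tens_def tsmult_def algebra_simps)
  qed
  ultimately show ?thesis
    unfolding r_tensor_def z_def[symmetric] by (simp only: add.assoc sum.distrib[symmetric])
qed

lemma r_in_wedge2_c_alg: "in_wedge2 c_alg r"
proof -
  have "in_tensor2 c_alg (tsmult (nu (k + 1)) (wedge (HP N (k + 1)) (E (k + 1) (N - k))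
          + (\<Sum>s\<in>{k + 2..N - k - 2}. wedge (E (k + 1) s) (E s (N - k)))))" if "k \<in> {0..<z}" for k
    using that z_bounds
    by (intro in_tensor2_tsmult in_tensor2_add in_tensor2_sum in_tensor2_wedge subspace_c_alg HP_in_c_alg E_in_c_alg)
      (auto simp: root_pairs_def)
  moreover have "in_tensor2 c_alg (wedge (E (k + 1) (N - k - 1)) (Dperp (Suc k)))" if "k < N - z - 1" for k
    using that z_bounds
    by (intro in_tensor2_wedge subspace_c_alg E_in_c_alg Dperp_in_c_alg) (auto simp: root_pairs_def)
  ultimately have "in_tensor2 c_alg r"
    unfolding r_tensor_regroup by (intro in_tensor2_add in_tensor2_sum) auto
  moreover have "skew_tensor r"
    unfolding r_tensor_def
    by (intro skew_tensor_add skew_tensor_sum skew_tensor_tsmult skew_tensor_wedge)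
  ultimately show ?thesis
    by (simp add: in_wedge2_iff)
qed

definition r_HP_part :: ctens where
  "r_HP_part a b k l = (\<Sum>p\<in>{1..z}. nu p *
     (HP N p a b * E p (N + 1 - p) k l - E p (N + 1 - p) a b * HP N p k l))"

definition r_E_part :: ctens where
  "r_E_part a b k l = (\<Sum>p\<in>{1..z}. nu p * (\<Sum>s\<in>{p + 1..N - p}.
     E p s a b * E s (N + 1 - p) k l - E s (N + 1 - p) a b * E p s k l))"

definition r_Hperp_part :: ctens where
  "r_Hperp_part a b k l = (\<Sum>i\<in>{1..N - z - 1}. rho i *
     (Hperp N i a b * E i (N - i) k l - E i (N - i) a b * Hperp N i k l))"

lemma r_apply: "r a b k l = r_HP_part a b k l + r_E_part a b k l + r_Hperp_part a b k l"
proof -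
  have shift: "(\<Sum>q\<in>{0..<z}. g (Suc q)) = (\<Sum>p\<in>{Suc 0..z}. g p)" for g :: "nat \<Rightarrow> complex"
    using sum.shift_bounds_Suc_ivl[of g 0 z] by (simp add: atLeastLessThanSuc_atLeastAtMost)
  show ?thesis
    unfolding r_tensor_def z_def[symmetric] z_bounds(4) r_HP_part_def r_E_part_def r_Hperp_part_def
      tsmult_def wedge_def tens_def
    by (simp add: sum_fun_apply distrib_left sum.distrib flip: shift)
qed

lemma r_HP_part_offdiag:
  assumes "a \<noteq> b"
  shows "r_HP_part a b k l = (if 1 \<le> a \<and> a \<le> z \<and> b = N + 1 - a then - nu a * HP N a k l else 0)"
proof -
  have "r_HP_part a b k l
      = (\<Sum>p\<in>{1..z}. if p = a then (if b = N + 1 - a then - nu a * HP N a k l else 0) else 0)"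
    unfolding r_HP_part_def using assms by (intro sum.cong refl) (auto simp: HP_apply E_apply)
  then show ?thesis
    by (simp add: sum.delta)
qed

lemma r_HP_part_diag_diff:
  assumes "1 \<le> p" "p \<le> z"
  shows "r_HP_part p p k l - r_HP_part N N k l = nu p * E p (N + 1 - p) k l"
proof -
  have "r_HP_part p p k l - r_HP_part N N k l = (\<Sum>q\<in>{1..z}. if q = p then nu p * E p (N + 1 - p) k l else 0)"
    unfolding r_HP_part_def sum_subtractf[symmetric] using assms z_bounds(1-3)
    by (intro sum.cong refl) (auto simp: HP_apply E_apply algebra_simps)
  then show ?thesis
    using assms by (simp add: sum.delta)
qed

lemma r_Hperp_part_offdiag:
  assumes "a \<noteq> b"
  shows "r_Hperp_part a b k l = (if 1 \<le> a \<and> a \<le> N - z - 1 \<and> b = N - a then - rho a * Hperp N a k l else 0)"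
proof -
  have "r_Hperp_part a b k l
      = (\<Sum>i\<in>{1..N - z - 1}. if i = a then (if b = N - a then - rho a * Hperp N a k l else 0) else 0)"
    unfolding r_Hperp_part_def using assms by (intro sum.cong refl) (auto simp: Hperp_apply E_apply)
  then show ?thesis
    by (simp add: sum.delta)
qed

lemma r_Hperp_part_diag_diff:
  assumes "1 \<le> p" "p \<le> z"
  shows "r_Hperp_part p p k l - r_Hperp_part N N k l = - (\<Sum>i\<in>{1..<p}. rho i * E i (N - i) k l)"
proof -
  have "r_Hperp_part p p k l - r_Hperp_part N N k l
      = (\<Sum>i\<in>{1..N - z - 1}. if i < p then - (rho i * E i (N - i) k l) else 0)"
    unfolding r_Hperp_part_def sum_subtractf[symmetric] using assms z_bounds(1-3)
    by (intro sum.cong refl) (auto simp: Hperp_apply E_apply algebra_simps)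
  also have "{i \<in> {1..N - z - 1}. i < p} = {1..<p}"
    using assms z_bounds(1-3) by auto
  then have "(\<Sum>i\<in>{1..N - z - 1}. if i < p then - (rho i * E i (N - i) k l) else 0)
      = - (\<Sum>i\<in>{1..<p}. rho i * E i (N - i) k l)"
    by (simp add: sum_negf flip: sum.inter_filter)
  finally show ?thesis .
qed

lemma r_E_part_apply:
  "r_E_part a b k l =
     (if 1 \<le> a \<and> a \<le> z \<and> a < b \<and> b \<le> N - a then nu a * E b (N + 1 - a) k l else 0)
   - (if b \<le> N \<and> N + 1 - b \<le> z \<and> N + 1 - b < a \<and> a < b then nu (N + 1 - b) * E (N + 1 - b) a k l else 0)"
proof -
  have "(\<Sum>s\<in>{p + 1..N - p}. E p s a b * E s (N + 1 - p) k l)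
      = (if p = a then (if a < b \<and> b \<le> N - a then E b (N + 1 - a) k l else 0) else 0)" for p
  proof -
    have "(\<Sum>s\<in>{p + 1..N - p}. E p s a b * E s (N + 1 - p) k l)
        = (\<Sum>s\<in>{p + 1..N - p}. if s = b then (if p = a then E b (N + 1 - p) k l else 0) else 0)"
      by (rule sum.cong[OF refl]) (auto simp: E_apply)
    then show ?thesis
      by (auto simp: sum.delta)
  qed
  then have first: "(\<Sum>p\<in>{1..z}. nu p * (\<Sum>s\<in>{p + 1..N - p}. E p s a b * E s (N + 1 - p) k l))
      = (if 1 \<le> a \<and> a \<le> z \<and> a < b \<and> b \<le> N - a then nu a * E b (N + 1 - a) k l else 0)"
    by (simp add: if_distrib[of "\<lambda>x. _ * x"] sum.delta cong: if_cong)
  have "(\<Sum>s\<in>{p + 1..N - p}. E s (N + 1 - p) a b * E p s k l)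
      = (if p = N + 1 - b then (if b \<le> N \<and> p < a \<and> a < b then E p a k l else 0) else 0)"
    if "p \<in> {1..z}" for p
  proof -
    have "(\<Sum>s\<in>{p + 1..N - p}. E s (N + 1 - p) a b * E p s k l)
        = (\<Sum>s\<in>{p + 1..N - p}. if s = a then (if b = N + 1 - p then E p a k l else 0) else 0)"
      by (rule sum.cong[OF refl]) (auto simp: E_apply)
    then show ?thesis
      using that z_bounds(1-3) by (auto simp: sum.delta)
  qed
  then have second: "(\<Sum>p\<in>{1..z}. nu p * (\<Sum>s\<in>{p + 1..N - p}. E s (N + 1 - p) a b * E p s k l))
      = (if b \<le> N \<and> N + 1 - b \<le> z \<and> N + 1 - b < a \<and> a < b then nu (N + 1 - b) * E (N + 1 - b) a k l else 0)"
    by (auto simp: if_distrib[of "\<lambda>x. _ * x"] sum.delta cong: if_cong)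
  show ?thesis
    unfolding r_E_part_def first[symmetric] second[symmetric]
    by (simp add: sum_subtractf right_diff_distrib)
qed

lemma r_slice_E_left:
  assumes "1 \<le> p" "p \<le> z" "p + 1 \<le> s" "s \<le> N - p"
  shows "r s (N + 1 - p) = msmult (- nu p) (E p s)"
  using assms z_bounds(1-3)
  by (auto simp: fun_eq_iff r_apply r_HP_part_offdiag r_E_part_apply r_Hperp_part_offdiag)

lemma r_slice_E_right:
  assumes "1 \<le> p" "p \<le> z" "p + 1 \<le> s" "s \<le> N - p - 1"
  shows "r p s = msmult (nu p) (E s (N + 1 - p))"
  using assms z_bounds(1-3)
  by (auto simp: fun_eq_iff r_apply r_HP_part_offdiag r_E_part_apply r_Hperp_part_offdiag)

lemma r_slice_HP:
  assumes "1 \<le> p" "p \<le> z"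
  shows "r p (N + 1 - p) = msmult (- nu p) (HP N p)"
  using assms z_bounds(1-3)
  by (auto simp: fun_eq_iff r_apply r_HP_part_offdiag r_E_part_apply r_Hperp_part_offdiag)

lemma r_slice_Dperp:
  assumes "1 \<le> i" "i \<le> N - z - 1"
  shows "r i (N - i) = Dperp i"
  using assms z_bounds(1-3)
  by (auto simp: fun_eq_iff Dperp_def r_apply r_HP_part_offdiag r_E_part_apply r_Hperp_part_offdiag)

lemma r_slice_diag_diff:
  assumes "1 \<le> p" "p \<le> z"
  shows "r p p - r N N = msmult (nu p) (E p (N + 1 - p)) - (\<Sum>i\<in>{1..<p}. msmult (rho i) (E i (N - i)))"
proof (intro ext)
  fix k l
  have "r p p k l - r N N k l = (r_HP_part p p k l - r_HP_part N N k l)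
      + (r_E_part p p k l - r_E_part N N k l) + (r_Hperp_part p p k l - r_Hperp_part N N k l)"
    by (simp add: r_apply)
  then show "(r p p - r N N) k l
      = (msmult (nu p) (E p (N + 1 - p)) - (\<Sum>i\<in>{1..<p}. msmult (rho i) (E i (N - i)))) k l"
    using assms by (simp add: r_HP_part_diag_diff r_Hperp_part_diag_diff r_E_part_apply sum_fun_apply)
qed

section \<open>The induced map of r is onto the algebra\<close>

abbreviation r_image :: "cmat set" where
  "r_image \<equiv> range (induced_map N r)"

lemma r_slice_in_r_image: "a \<in> {1..N} \<Longrightarrow> b \<in> {1..N} \<Longrightarrow> r a b \<in> r_image"
  by (metis induced_map_E rangeI)

lemmas r_image_scale = mat.subspace_scale[OF subspace_range_induced_map]
lemmas r_image_add = mat.subspace_add[OF subspace_range_induced_map]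
lemmas r_image_diff = mat.subspace_diff[OF subspace_range_induced_map]
lemmas r_image_neg = mat.subspace_neg[OF subspace_range_induced_map]
lemmas r_image_sum = mat.subspace_sum[OF subspace_range_induced_map]

lemma r_image_smult_cancel:
  assumes "c \<noteq> 0" "msmult c A \<in> r_image"
  shows "A \<in> r_image"
proof -
  have "msmult (1 / c) (msmult c A) \<in> r_image"
    using assms(2) by (rule r_image_scale)
  moreover have "msmult (1 / c) (msmult c A) = A"
    using assms(1) by (simp add: fun_eq_iff)
  ultimately show ?thesis
    by simp
qed

lemma E_left_in_r_image:
  assumes "1 \<le> p" "p \<le> z" "p + 1 \<le> s" "s \<le> N - p"
  shows "E p s \<in> r_image"
proof (rule r_image_smult_cancel)
  show "- nu p \<noteq> 0"
    using nu_nonzero' assms by simp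
  have "r s (N + 1 - p) \<in> r_image"
    using assms z_bounds by (intro r_slice_in_r_image) auto
  then show "msmult (- nu p) (E p s) \<in> r_image"
    by (simp only: r_slice_E_left[OF assms])
qed

lemma E_right_in_r_image:
  assumes "1 \<le> p" "p \<le> z" "p + 1 \<le> s" "s \<le> N - p - 1"
  shows "E s (N + 1 - p) \<in> r_image"
proof (rule r_image_smult_cancel)
  show "nu p \<noteq> 0"
    using nu_nonzero' assms by simp
  have "r p s \<in> r_image"
    using assms z_bounds by (intro r_slice_in_r_image) auto
  then show "msmult (nu p) (E s (N + 1 - p)) \<in> r_image"
    by (simp only: r_slice_E_right[OF assms])
qed

lemma E_antidiag_in_r_image:
  assumes p: "1 \<le> p" "p \<le> z"
  shows "E p (N + 1 - p) \<in> r_image"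
proof (rule r_image_smult_cancel)
  show "nu p \<noteq> 0"
    using nu_nonzero' p by simp
  let ?S = "\<Sum>i\<in>{1..<p}. msmult (rho i) (E i (N - i))"
  have "msmult (nu p) (E p (N + 1 - p)) = r p p - r N N + ?S"
    by (simp add: r_slice_diag_diff[OF p])
  moreover have "?S \<in> r_image"
    using p z_bounds by (intro r_image_sum r_image_scale E_left_in_r_image) auto
  ultimately show "msmult (nu p) (E p (N + 1 - p)) \<in> r_image"
    using p z_bounds by (simp add: r_image_add r_image_diff r_slice_in_r_image)
qed

lemma E_in_r_image:
  assumes "(a, b) \<in> root_pairs"
  shows "E a b \<in> r_image"
proof -
  have ab: "1 \<le> a" "a < b" "b \<le> N" "\<not> (z + 1 \<le> a \<and> b = Suc a)"
    using assms by (auto simp: root_pairs_def)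
  consider "a \<le> z" "b \<le> N - a" | "a \<le> z" "b = N + 1 - a" | "N + 2 - a \<le> b \<or> z + 1 \<le> a"
    by linarith
  then show ?thesis
  proof cases
    case 3
    then have "E a (N + 1 - (N + 1 - b)) \<in> r_image"
      using ab z_bounds by (intro E_right_in_r_image) auto
    then show ?thesis
      using ab by simp
  qed (use ab E_left_in_r_image E_antidiag_in_r_image in auto)
qed

lemma lift_diag_HP_low_in_r_image:
  assumes "1 \<le> p" "p \<le> z"
  shows "lift_diag (HP N p) \<in> r_image"
proof (rule r_image_smult_cancel)
  show "- nu p \<noteq> 0"
    using nu_nonzero' assms by simp
  have "r p (N + 1 - p) \<in> r_image"
    using assms z_bounds by (intro r_slice_in_r_image) auto
  then show "msmult (- nu p) (lift_diag (HP N p)) \<in> r_image"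
    by (simp only: r_slice_HP[OF assms] lift_diag_HP[OF assms])
qed

lemma lift_diag_Hperp_in_r_image:
  assumes "1 \<le> i" "i \<le> N - z - 1"
  shows "lift_diag (Hperp N i) \<in> r_image"
proof (rule r_image_smult_cancel)
  show "- rho i \<noteq> 0"
    using rho_nonzero' assms by simp
  have "r i (N - i) \<in> r_image"
    using assms z_bounds by (intro r_slice_in_r_image) auto
  then show "msmult (- rho i) (lift_diag (Hperp N i)) \<in> r_image"
    by (simp only: r_slice_Dperp[OF assms] Dperp_lift_diag[OF assms])
qed

lemma lift_diag_HP_middle_in_r_image: "lift_diag (HP N (z + 1)) \<in> r_image"
proof (cases "N = 2 * z + 1")
  case True
  then show ?thesis
    unfolding HP_middle_odd[OF True] lift_diag_uminus
    using z_bounds by (intro r_image_neg lift_diag_Hperp_in_r_image) auto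
next
  case False
  then have even: "N = 2 * z"
    using z_bounds by auto
  then show ?thesis
    unfolding HP_middle_even[OF even z_bounds(1)] lift_diag_diff lift_diag_uminus
    using z_bounds N_ge_3
    by (intro r_image_diff r_image_neg lift_diag_Hperp_in_r_image lift_diag_HP_low_in_r_image) auto
qed

(* For a > z, H^P_a is a combination of the H^P_q with q <= z and the Hperp_i, whose lifts are
   (multiples of) slices of r. *)
lemma lift_diag_HP_in_r_image:
  assumes "a \<in> {1..N}"
  shows "lift_diag (HP N a) \<in> r_image"
proof -
  have "a \<le> N"
    using assms by simp
  then consider "a \<le> z" | "a = z + 1" | "z + 2 \<le> a" "a \<le> N - 1" | "a = N"
    by linarith
  then show ?thesis
  proof cases
    case 1
    then show ?thesis
      using assms by (intro lift_diag_HP_low_in_r_image) auto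
  next
    case 2
    then show ?thesis
      using lift_diag_HP_middle_in_r_image by simp
  next
    case 3
    define i where "i = N - a"
    have i: "1 \<le> i" "2 * i + 3 \<le> N" "a = N - i"
      using 3 z_bounds unfolding i_def by auto
    show ?thesis
      unfolding i(3) HP_mirror_eq[OF i(1,2)] lift_diag_diff lift_diag_uminus
      using i z_bounds
      by (intro r_image_diff r_image_neg lift_diag_Hperp_in_r_image lift_diag_HP_low_in_r_image) auto
  next
    case 4
    have eq: "HP N a = Hperp N 1 - HP N 1"
      using 4 N_ge_3 by (simp add: HP_last_eq)
    show ?thesis
      unfolding eq lift_diag_diff using z_bounds N_ge_3
      by (intro r_image_diff lift_diag_Hperp_in_r_image lift_diag_HP_low_in_r_image) auto
  qed
qed

lemma upper_triangular_decomp: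
  assumes y: "upper_triangular N y"
  shows "y = (\<Sum>x\<in>root_pairs. msmult (y (fst x) (snd x)) (E (fst x) (snd x))) + mdiag y
             + (\<lambda>a b. if z + 1 \<le> a \<and> a \<le> N - 1 \<and> b = Suc a then y a b else 0)"
proof (intro ext)
  fix k l
  have "(\<Sum>x\<in>root_pairs. msmult (y (fst x) (snd x)) (E (fst x) (snd x))) k l
      = (\<Sum>x\<in>root_pairs. if x = (k, l) then y k l else 0)"
    unfolding sum_fun_apply by (rule sum.cong) (auto simp: E_apply)
  also have "\<dots> = (if (k, l) \<in> root_pairs then y k l else 0)"
    using finite_root_pairs by (simp add: sum.delta)
  finally have sum: "(\<Sum>x\<in>root_pairs. msmult (y (fst x) (snd x)) (E (fst x) (snd x))) k l
      = (if (k, l) \<in> root_pairs then y k l else 0)" .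
  have "y k l = 0" if "(k, l) \<notin> root_pairs" "k \<noteq> l" "\<not> (z + 1 \<le> k \<and> k \<le> N - 1 \<and> l = Suc k)"
  proof (cases "l < k")
    case False
    with that have "k \<notin> {1..N} \<or> l \<notin> {1..N}"
      by (auto simp: root_pairs_def)
    then show ?thesis
      by (rule upper_triangular_outside[OF y])
  qed (use y in \<open>simp add: upper_triangular_below\<close>)
  then show "y k l = ((\<Sum>x\<in>root_pairs. msmult (y (fst x) (snd x)) (E (fst x) (snd x))) + mdiag y
      + (\<lambda>a b. if z + 1 \<le> a \<and> a \<le> N - 1 \<and> b = Suc a then y a b else 0)) k l"
    unfolding plus_fun_apply sum by (auto simp: mdiag_def root_pairs_def)
qed

lemma c_alg_decomp:
  assumes y: "y \<in> c_alg"
  shows "y = (\<Sum>x\<in>root_pairs. msmult (y (fst x) (snd x)) (E (fst x) (snd x))) + lift_diag (mdiag y)"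
proof -
  have "mdiag y + (\<lambda>a b. if z + 1 \<le> a \<and> a \<le> N - 1 \<and> b = Suc a then y a b else 0) = lift_diag (mdiag y)"
    using y by (auto simp: c_alg_iff lift_diag_def mdiag_def fun_eq_iff)
  then show ?thesis
    using upper_triangular_decomp[of y] y by (simp add: c_alg_iff add.assoc)
qed

lemma c_alg_subset_r_image: "c_alg \<subseteq> r_image"
proof
  fix y assume y: "y \<in> c_alg"
  then have "y \<in> gl N" "mtrace N y = 0"
    by (simp_all add: c_alg_iff upper_triangular_def)
  then have "lift_diag (mdiag y) = (\<Sum>a\<in>{1..<N}. msmult (y a a) (lift_diag (HP N a) - lift_diag (HP N N)))"
    using N_ge_3 by (simp add: mdiag_traceless_decomp lift_diag_sum lift_diag_smult HP_def
        flip: lift_diag_diff)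
  also have "\<dots> \<in> r_image"
    using N_ge_3 by (intro r_image_sum r_image_scale r_image_diff lift_diag_HP_in_r_image) auto
  finally have "lift_diag (mdiag y) \<in> r_image" .
  moreover have "(\<Sum>x\<in>root_pairs. msmult (y (fst x) (snd x)) (E (fst x) (snd x))) \<in> r_image"
    by (intro r_image_sum r_image_scale E_in_r_image) simp
  ultimately show "y \<in> r_image"
    by (subst c_alg_decomp[OF y]) (rule r_image_add)
qed

section \<open>Dimension\<close>

lemma galg_decomp:
  assumes y: "y \<in> galg N"
  shows "y = (\<Sum>x\<in>root_pairs. msmult (y (fst x) (snd x)) (E (fst x) (snd x))) + mdiag y"
proof (intro ext)
  fix k l
  have ut: "upper_triangular N y"
    using y by (simp add: galg_def borel_iff)
  have sup: "\<forall>j. z + 1 \<le> j \<and> j \<le> N - 1 \<longrightarrow> y j (j + 1) = 0"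
    using y unfolding galg_def z_def by blast
  have "y k l = ((\<Sum>x\<in>root_pairs. msmult (y (fst x) (snd x)) (E (fst x) (snd x))) + mdiag y
      + (\<lambda>a b. if z + 1 \<le> a \<and> a \<le> N - 1 \<and> b = Suc a then y a b else 0)) k l"
    by (rule fun_cong[OF fun_cong[OF upper_triangular_decomp[OF ut]]])
  also have "\<dots> = ((\<Sum>x\<in>root_pairs. msmult (y (fst x) (snd x)) (E (fst x) (snd x))) + mdiag y) k l"
    using sup by simp
  finally show "y k l = ((\<Sum>x\<in>root_pairs. msmult (y (fst x) (snd x)) (E (fst x) (snd x))) + mdiag y) k l" .
qed

definition basis_index :: "(nat \<times> nat) set" where
  "basis_index = root_pairs \<union> (\<lambda>a. (a, a)) ` {1..<N}"

definition basis_matrix :: "nat \<times> nat \<Rightarrow> cmat" where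
  "basis_matrix x = (if fst x = snd x then E (fst x) (fst x) - E N N else E (fst x) (snd x))"

lemma finite_basis_index: "finite basis_index"
  by (simp add: basis_index_def finite_root_pairs)

lemma basis_matrix_eval:
  assumes "x \<in> basis_index" "y \<in> basis_index"
  shows "basis_matrix x (fst y) (snd y) = (if x = y then 1 else 0)"
proof -
  obtain c d a b where xy: "x = (c, d)" "y = (a, b)"
    by fastforce
  have diag: "p < N" if "(p, p) \<in> basis_index" for p
    using that by (auto simp: basis_index_def root_pairs_def)
  show ?thesis
  proof (cases "c = d")
    case True
    then show ?thesis
      using assms diag[of c] diag[of a] unfolding xy by (cases "a = b") (auto simp: basis_matrix_def E_apply)
  qed (simp add: xy basis_matrix_def E_apply)
qed

lemma inj_on_basis_matrix: "inj_on basis_matrix basis_index"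
proof (rule inj_onI)
  fix x y assume "x \<in> basis_index" "y \<in> basis_index" "basis_matrix x = basis_matrix y"
  then show "x = y"
    using basis_matrix_eval[of x y] basis_matrix_eval[of y y] by (auto split: if_splits)
qed

lemma basis_matrix_in_galg: "x \<in> basis_index \<Longrightarrow> basis_matrix x \<in> galg N"
proof (induct x)
  case (Pair a b)
  show ?case
  proof (cases "(a, b) \<in> root_pairs")
    case True
    have "E a b \<in> twisted_borel N {z + 1..N - 1} (\<lambda>_. 0)"
      using True by (rule E_in_twisted_borel)
    moreover have "a \<noteq> b"
      using True by (simp add: root_pairs_def)
    ultimately show ?thesis
      by (simp add: basis_matrix_def galg_eq_twisted_borel z_def)
  next
    case False
    then have "b = a" "1 \<le> a" "a < N"
      using Pair by (auto simp: basis_index_def)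
    then show ?thesis
      by (auto simp: basis_matrix_def galg_def borel_iff upper_triangular_def gl_iff E_apply
          mtrace_def sum_subtractf)
  qed
qed

lemma galg_subset_span_basis: "galg N \<subseteq> mat.span (basis_matrix ` basis_index)"
proof
  fix y assume y: "y \<in> galg N"
  have "basis_matrix x \<in> mat.span (basis_matrix ` basis_index)" if "x \<in> basis_index" for x
    using that by (intro mat.span_base imageI)
  then have "E a b \<in> mat.span (basis_matrix ` basis_index)" if "(a, b) \<in> root_pairs" for a b
    using that by (force simp: basis_index_def basis_matrix_def root_pairs_def)
  moreover have "E a a - E N N \<in> mat.span (basis_matrix ` basis_index)" if "a \<in> {1..<N}" for a
    using that \<open>\<And>x. x \<in> basis_index \<Longrightarrow> _\<close>[of "(a, a)"] by (simp add: basis_index_def basis_matrix_def)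
  moreover have "y \<in> gl N" "mtrace N y = 0"
    using y by (auto simp: galg_def borel_def sl_def)
  ultimately show "y \<in> mat.span (basis_matrix ` basis_index)"
    using N_ge_3
    by (subst galg_decomp[OF y], subst mdiag_traceless_decomp)
       (auto intro!: mat.span_add mat.span_sum mat.span_scale)
qed

lemma independent_basis: "mat.independent (basis_matrix ` basis_index)"
proof
  assume "mat.dependent (basis_matrix ` basis_index)"
  then obtain u where u: "\<exists>v\<in>basis_matrix ` basis_index. u v \<noteq> 0"
    "(\<Sum>v\<in>basis_matrix ` basis_index. msmult (u v) v) = 0"
    using mat.dependent_finite finite_basis_index by blast
  have sum0: "(\<Sum>x\<in>basis_index. msmult (u (basis_matrix x)) (basis_matrix x)) = 0"
    using u(2) inj_on_basis_matrix by (simp add: sum.reindex)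
  have "u (basis_matrix y) = 0" if y: "y \<in> basis_index" for y
  proof -
    have "0 = (\<Sum>x\<in>basis_index. msmult (u (basis_matrix x)) (basis_matrix x)) (fst y) (snd y)"
      using sum0 by simp
    also have "\<dots> = (\<Sum>x\<in>basis_index. if x = y then u (basis_matrix y) else 0)"
      unfolding sum_fun_apply msmult_apply
      by (rule sum.cong[OF refl]) (use y in \<open>simp add: basis_matrix_eval\<close>)
    also have "\<dots> = u (basis_matrix y)"
      using y finite_basis_index by simp
    finally show ?thesis
      by simp
  qed
  then show False
    using u(1) by auto
qed

lemma card_basis_index: "card basis_index = (N^2 + N - 2 * ((N + 1) div 2)) div 2"
proof -
  let ?U = "{(a, b). 1 \<le> a \<and> a < b \<and> b \<le> N}"
  let ?S = "(\<lambda>a. (a, Suc a)) ` {z + 1..N - 1}"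
  have fin: "finite ?U"
    by (rule finite_subset[of _ "{1..N} \<times> {1..N}"]) auto
  have "root_pairs = ?U - ?S" "?S \<subseteq> ?U"
    using z_bounds by (auto simp: root_pairs_def)
  moreover have "card ?S = N - 1 - z"
    by (subst card_image) (auto simp: inj_on_def)
  moreover have "card ?S \<le> card ?U"
    using fin \<open>?S \<subseteq> ?U\<close> by (rule card_mono)
  ultimately have root: "card root_pairs + (N - 1 - z) = card ?U"
    using fin by (simp add: card_Diff_subset finite_subset)
  have "root_pairs \<inter> (\<lambda>a. (a, a)) ` {1..<N} = {}"
    by (auto simp: root_pairs_def)
  moreover have "card ((\<lambda>a. (a, a)) ` {1..<N}) = N - 1"
    by (subst card_image) (auto simp: inj_on_def)
  ultimately have "card basis_index = card root_pairs + (N - 1)"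
    unfolding basis_index_def using finite_root_pairs by (simp add: card_Un_disjoint)
  with root z_bounds have "card basis_index = card ?U + z"
    by linarith
  moreover have "N^2 + N - 2 * ((N + 1) div 2) = 2 * (card ?U + z)"
  proof -
    have "N^2 + N = N * (N - 1) + 2 * N"
      using N_ge_3 by (cases N) (auto simp: power2_eq_square algebra_simps)
    then show ?thesis
      unfolding z_bounds(4) using card_strict_pairs[of N] z_bounds(1-3) by arith
  qed
  ultimately show ?thesis
    by simp
qed

lemma mdim_c_alg: "mdim c_alg = (N^2 + N - 2 * ((N + 1) div 2)) div 2"
proof -
  have "mat.subspace (galg N)"
    unfolding galg_eq_twisted_borel by (rule subspace_lie_subalgebra[OF lie_subalgebra_twisted_borel_0])
  then have "mat.dim (phi ` galg N) = card (basis_matrix ` basis_index)"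
    using basis_matrix_in_galg galg_subset_span_basis independent_basis inj_on_phi
    unfolding phi_def by (intro dim_linear_image linear_mconj) auto
  then show ?thesis
    unfolding mdim_def phi_galg card_image[OF inj_on_basis_matrix] card_basis_index .
qed

end

theorem mainTheorem7:
  fixes N :: nat and \<nu> \<rho> :: "nat \<Rightarrow> complex"
  assumes "N \<ge> 3"
    and "\<forall>k\<in>{1..N div 2}. \<nu> k \<noteq> 0"
    and "\<forall>i\<in>{1..(N+1) div 2 - 1}. \<rho> i \<noteq> 0"
  shows "\<exists>\<phi>. lie_hom_on N (galg N) \<phi> \<and> inj_on \<phi> (galg N) \<and> \<phi> ` galg N \<subseteq> borel N
            \<and> in_wedge2 (\<phi> ` galg N) (r_tensor N \<nu> \<rho>)
            \<and> nondegenerate N (\<phi> ` galg N) (r_tensor N \<nu> \<rho>)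
            \<and> is_carrier N (r_tensor N \<nu> \<rho>) (\<phi> ` galg N)
            \<and> mdim (\<phi> ` galg N) = (N^2 + N - 2 * ((N+1) div 2)) div 2"
proof -
  interpret rmatrix N \<nu> \<rho>
    using assms by unfold_locales
  show ?thesis
  proof (intro exI conjI)
    show "lie_hom_on N (galg N) phi" "inj_on phi (galg N)"
      by (rule lie_hom_on_phi inj_on_phi)+
    show "phi ` galg N \<subseteq> borel N" "in_wedge2 (phi ` galg N) r"
      unfolding phi_galg by (rule c_alg_subset_borel r_in_wedge2_c_alg)+
    show "nondegenerate N (phi ` galg N) r"
      unfolding phi_galg
      by (rule nondegenerate_if_range_induced_map[OF subspace_c_alg r_in_wedge2_c_alg c_alg_subset_r_image])
    show "is_carrier N r (phi ` galg N)"
      unfolding phi_galg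
      by (rule is_carrier_if_range_induced_map[OF lie_subalgebra_c_alg r_in_wedge2_c_alg c_alg_subset_r_image])
    show "mdim (phi ` galg N) = (N^2 + N - 2 * ((N + 1) div 2)) div 2"
      unfolding phi_galg by (rule mdim_c_alg)
  qed
qed

end
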